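(* Let $A=(A,\oplus,\odot)$ be a skew brace, and $D$ a cyclic characteristic subgroup of $A_{\oplus}$ such that $D\leq Z\left(A_{\oplus}^{(n)}\right)$ for some positive integer $n$. Then there exists a positive integer $m$ such that $A_{\odot}^{(m+n)}\leq C_{A_{\oplus}}(D)$.
   Context: A skew brace is a set $A$ with two binary operations $\oplus,\odot$ such that $A_{\oplus}=(A,\oplus)$ and $A_{\odot}=(A,\odot)$ are groups and $a\odot(b\oplus c)=(a\odot b)\ominus a\oplus(a\odot c)$ for all $a,b,c\in A$, where $\ominus a$ is the inverse of $a$ in $A_{\oplus}$. The derived series of a group $G$ is indexed by $G^{(1)}=G$, $G^{(i+1)}=[G^{(i)},G^{(i)}]$; $Z(G)$ denotes the center and $C_G(H)$ the centralizer of $H$ in $G$. *)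

theory Defs
  imports "HOL-Algebra.Algebra"
begin

text \<open>A skew brace: two group structures on the same carrier, the additive group P
  (operation written \<oplus> in the paper) and the multiplicative group M (\<odot>), such that
  a \<odot> (b \<oplus> c) = (a \<odot> b) \<ominus> a \<oplus> (a \<odot> c).\<close>
definition skew_brace :: "'a monoid \<Rightarrow> 'a monoid \<Rightarrow> bool" where
  "skew_brace P M \<longleftrightarrow> group P \<and> group M \<and> carrier P = carrier M \<and>
     (\<forall>a\<in>carrier P. \<forall>b\<in>carrier P. \<forall>c\<in>carrier P.
        a \<otimes>\<^bsub>M\<^esub> (b \<otimes>\<^bsub>P\<^esub> c) =
        (a \<otimes>\<^bsub>M\<^esub> b) \<otimes>\<^bsub>P\<^esub> inv\<^bsub>P\<^esub> a \<otimes>\<^bsub>P\<^esub> (a \<otimes>\<^bsub>M\<^esub> c))"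

text \<open>Derived series indexed from 1: G^(1) = G, G^(i+1) = [G^(i), G^(i)].\<close>
definition derived_series :: "('a, 'b) monoid_scheme \<Rightarrow> nat \<Rightarrow> 'a set" where
  "derived_series G i = (derived G ^^ (i - 1)) (carrier G)"

definition group_center :: "('a, 'b) monoid_scheme \<Rightarrow> 'a set" where
  "group_center G = {z \<in> carrier G. \<forall>g\<in>carrier G. z \<otimes>\<^bsub>G\<^esub> g = g \<otimes>\<^bsub>G\<^esub> z}"

definition centralizer :: "('a, 'b) monoid_scheme \<Rightarrow> 'a set \<Rightarrow> 'a set" where
  "centralizer G H = {g \<in> carrier G. \<forall>h\<in>H. g \<otimes>\<^bsub>G\<^esub> h = h \<otimes>\<^bsub>G\<^esub> g}"

definition characteristic_subgroup :: "'a set \<Rightarrow> ('a, 'b) monoid_scheme \<Rightarrow> bool" where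
  "characteristic_subgroup D G \<longleftrightarrow> subgroup D G \<and> (\<forall>\<phi>\<in>auto G. \<phi> ` D \<subseteq> D)"

end

theory Submission
  imports Defs
begin

(* For a in A the maps lambda_a(x) = -a + a.x and gamma_a(x) = a.x - a are automorphisms
   of the additive group, and a |-> lambda_a, a |-> gamma_a are actions of the multiplicative
   group. A characteristic subgroup D is invariant under both, and the endomorphisms of a cyclic
   group commute, so every multiplicative commutator c fixes D pointwise under both actions:
   c + d = c.d = d + c for d in D. *)

lemma cyclic_group_endomorphisms_commute:
  assumes "group H" and "cyclic_group H"
    and f: "f \<in> hom H H" and g: "g \<in> hom H H" and d: "d \<in> carrier H"
  shows "f (g d) = g (f d)"
proof -
  interpret H: group H by fact
  obtain x where x: "x \<in> carrier H" and gen: "carrier H = range (\<lambda>k::int. x [^]\<^bsub>H\<^esub> k)"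
    using \<open>cyclic_group H\<close> H.cyclic_group by blast
  have "f x \<in> carrier H" and "g x \<in> carrier H"
    using x f g by (auto simp: hom_def)
  then obtain k l :: int where k: "f x = x [^]\<^bsub>H\<^esub> k" and l: "g x = x [^]\<^bsub>H\<^esub> l"
    using gen by blast
  obtain j :: int where j: "d = x [^]\<^bsub>H\<^esub> j"
    using d gen by auto
  have "f (x [^]\<^bsub>H\<^esub> i) = x [^]\<^bsub>H\<^esub> (k * i)" for i :: int
    using hom_int_pow[OF f x \<open>group H\<close> \<open>group H\<close>] k H.int_pow_pow[OF x] by simp
  moreover have "g (x [^]\<^bsub>H\<^esub> i) = x [^]\<^bsub>H\<^esub> (l * i)" for i :: int
    using hom_int_pow[OF g x \<open>group H\<close> \<open>group H\<close>] l H.int_pow_pow[OF x] by simp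
  ultimately show ?thesis
    using j by (simp add: mult.left_commute)
qed

lemma derived_series_subset_derived:
  assumes "group G" and "2 \<le> i"
  shows "derived_series G i \<subseteq> derived G (carrier G)"
proof -
  interpret G: group G by fact
  obtain k where "i = Suc (Suc k)"
    using \<open>2 \<le> i\<close> by (metis add_2_eq_Suc le_Suc_ex)
  then have "derived_series G i = derived G ((derived G ^^ k) (carrier G))"
    by (simp add: derived_series_def)
  also have "\<dots> \<subseteq> derived G (carrier G)"
    using G.mono_derived G.exp_of_derived_in_carrier by blast
  finally show ?thesis .
qed

lemma (in group) inv_mult_cancel_left [simp]:
  "x \<in> carrier G \<Longrightarrow> y \<in> carrier G \<Longrightarrow> inv x \<otimes> (x \<otimes> y) = y"
  by (simp add: m_assoc[symmetric])

lemma (in group) mult_inv_cancel_left [simp]: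
  "x \<in> carrier G \<Longrightarrow> y \<in> carrier G \<Longrightarrow> x \<otimes> (inv x \<otimes> y) = y"
  by (simp add: m_assoc[symmetric])

locale endo_action = M: group M + P: group P
  for M :: "'a monoid" and P :: "'b monoid" +
  fixes act :: "'a \<Rightarrow> 'b \<Rightarrow> 'b"
  assumes act_hom: "a \<in> carrier M \<Longrightarrow> act a \<in> hom P P"
    and act_mult: "\<lbrakk>a \<in> carrier M; b \<in> carrier M; x \<in> carrier P\<rbrakk> \<Longrightarrow>
      act (a \<otimes>\<^bsub>M\<^esub> b) x = act a (act b x)"
    and act_one: "x \<in> carrier P \<Longrightarrow> act \<one>\<^bsub>M\<^esub> x = x"
begin

lemma act_closed: "a \<in> carrier M \<Longrightarrow> x \<in> carrier P \<Longrightarrow> act a x \<in> carrier P"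
  using act_hom by (auto simp: hom_def)

lemma act_inv_act: "a \<in> carrier M \<Longrightarrow> x \<in> carrier P \<Longrightarrow> act (inv\<^bsub>M\<^esub> a) (act a x) = x"
  by (metis M.inv_closed M.l_inv act_mult act_one)

lemma act_act_inv: "a \<in> carrier M \<Longrightarrow> x \<in> carrier P \<Longrightarrow> act a (act (inv\<^bsub>M\<^esub> a) x) = x"
  by (metis M.inv_closed M.r_inv act_mult act_one)

lemma restrict_act_in_auto:
  assumes a: "a \<in> carrier M"
  shows "restrict (act a) (carrier P) \<in> auto P"
proof -
  have "restrict (act a) (carrier P) \<in> hom P P"
    using act_hom[OF a] by (auto simp: hom_def)
  moreover have "bij_betw (restrict (act a) (carrier P)) (carrier P) (carrier P)"
    by (rule bij_betw_byWitness[where f' = "act (inv\<^bsub>M\<^esub> a)"])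
      (use a act_closed act_inv_act act_act_inv in auto)
  ultimately show ?thesis
    by (simp add: auto_def Bij_def)
qed

lemma act_in_characteristic_subgroup:
  assumes "characteristic_subgroup D P" and "a \<in> carrier M" and "d \<in> D"
  shows "act a d \<in> D"
proof -
  have "D \<subseteq> carrier P"
    using assms(1) subgroup.subset by (auto simp: characteristic_subgroup_def)
  then show ?thesis
    using assms restrict_act_in_auto[of a] by (force simp: characteristic_subgroup_def)
qed

definition pointwise_stabilizer :: "'b set \<Rightarrow> 'a set" where
  "pointwise_stabilizer D = {a \<in> carrier M. \<forall>d\<in>D. act a d = d}"

lemma pointwise_stabilizer_subgroup:
  assumes D: "D \<subseteq> carrier P"
  shows "subgroup (pointwise_stabilizer D) M"
proof (rule M.subgroupI)
  show "pointwise_stabilizer D \<subseteq> carrier M"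
    by (auto simp: pointwise_stabilizer_def)
  have "\<one>\<^bsub>M\<^esub> \<in> pointwise_stabilizer D"
    using D act_one by (auto simp: pointwise_stabilizer_def)
  then show "pointwise_stabilizer D \<noteq> {}"
    by blast
next
  fix a assume "a \<in> pointwise_stabilizer D"
  then have a: "a \<in> carrier M" and fixed: "\<And>d. d \<in> D \<Longrightarrow> act a d = d"
    by (auto simp: pointwise_stabilizer_def)
  have "act (inv\<^bsub>M\<^esub> a) d = d" if "d \<in> D" for d
    using act_inv_act[OF a, of d] fixed[OF that] D that by auto
  then show "inv\<^bsub>M\<^esub> a \<in> pointwise_stabilizer D"
    using a by (simp add: pointwise_stabilizer_def)
next
  fix a b assume "a \<in> pointwise_stabilizer D" and "b \<in> pointwise_stabilizer D"
  then show "a \<otimes>\<^bsub>M\<^esub> b \<in> pointwise_stabilizer D"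
    using D act_mult by (auto simp: pointwise_stabilizer_def subset_iff)
qed

lemma derived_fixes_commuting_invariant_set:
  assumes D: "D \<subseteq> carrier P"
    and invariant: "\<And>a d. a \<in> carrier M \<Longrightarrow> d \<in> D \<Longrightarrow> act a d \<in> D"
    and commute: "\<And>a b d. \<lbrakk>a \<in> carrier M; b \<in> carrier M; d \<in> D\<rbrakk> \<Longrightarrow>
      act a (act b d) = act b (act a d)"
  shows "derived M (carrier M) \<subseteq> pointwise_stabilizer D"
proof -
  have "derived_set M (carrier M) \<subseteq> pointwise_stabilizer D"
  proof
    fix c assume "c \<in> derived_set M (carrier M)"
    then obtain x y where x: "x \<in> carrier M" and y: "y \<in> carrier M"
      and c: "c = x \<otimes>\<^bsub>M\<^esub> y \<otimes>\<^bsub>M\<^esub> inv\<^bsub>M\<^esub> x \<otimes>\<^bsub>M\<^esub> inv\<^bsub>M\<^esub> y"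
      by auto
    have "act c d = d" if d: "d \<in> D" for d
    proof -
      have "act c d = act x (act y (act (inv\<^bsub>M\<^esub> x) (act (inv\<^bsub>M\<^esub> y) d)))"
        using c x y d D act_mult act_closed by (simp add: subset_iff)
      also have "\<dots> = act x (act (inv\<^bsub>M\<^esub> x) (act y (act (inv\<^bsub>M\<^esub> y) d)))"
        using commute invariant x y d by simp
      also have "\<dots> = d"
        using x y d D act_act_inv act_closed by (simp add: subset_iff)
      finally show ?thesis .
    qed
    then show "c \<in> pointwise_stabilizer D"
      using c x y by (simp add: pointwise_stabilizer_def)
  qed
  then show ?thesis
    unfolding derived_def
    using M.generate_subgroup_incl pointwise_stabilizer_subgroup[OF D] by blast
qed

lemma derived_fixes_cyclic_characteristic_subgroup:
  assumes char: "characteristic_subgroup D P" and cyclic: "cyclic_group (P\<lparr>carrier := D\<rparr>)"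
  shows "derived M (carrier M) \<subseteq> pointwise_stabilizer D"
proof (rule derived_fixes_commuting_invariant_set)
  have sub: "subgroup D P"
    using char by (simp add: characteristic_subgroup_def)
  then show D: "D \<subseteq> carrier P"
    by (rule subgroup.subset)
  show invariant: "act a d \<in> D" if "a \<in> carrier M" "d \<in> D" for a d
    using act_in_characteristic_subgroup[OF char that] .
  have restricted_hom: "act a \<in> hom (P\<lparr>carrier := D\<rparr>) (P\<lparr>carrier := D\<rparr>)"
    if "a \<in> carrier M" for a
    using act_hom[OF that] invariant[OF that] D by (auto simp: hom_def subset_iff)
  show "act a (act b d) = act b (act a d)" if "a \<in> carrier M" "b \<in> carrier M" "d \<in> D" for a b d
    using cyclic_group_endomorphisms_commute[OF P.subgroup_imp_group[OF sub] cyclic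
        restricted_hom[OF that(1)] restricted_hom[OF that(2)]] that(3)
    by simp
qed

end

locale skew_brace_pair = P: group P + M: group M
  for P :: "'a monoid" (structure) and M :: "'a monoid" +
  assumes carrier_mult: "carrier M = carrier P"
    and brace_distrib: "\<lbrakk>a \<in> carrier P; b \<in> carrier P; c \<in> carrier P\<rbrakk> \<Longrightarrow>
      a \<otimes>\<^bsub>M\<^esub> (b \<otimes> c) = (a \<otimes>\<^bsub>M\<^esub> b) \<otimes> inv a \<otimes> (a \<otimes>\<^bsub>M\<^esub> c)"

lemma skew_brace_pairI: "skew_brace P M \<Longrightarrow> skew_brace_pair P M"
  by (simp add: skew_brace_def skew_brace_pair_def skew_brace_pair_axioms_def)

context skew_brace_pair
begin

lemma mult_closed [simp]: "a \<in> carrier P \<Longrightarrow> b \<in> carrier P \<Longrightarrow> a \<otimes>\<^bsub>M\<^esub> b \<in> carrier P"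
  using carrier_mult M.m_closed by blast

lemma one_mult_eq: "\<one>\<^bsub>M\<^esub> = \<one>"
proof -
  have "\<one> \<otimes>\<^bsub>M\<^esub> \<one> = (\<one> \<otimes>\<^bsub>M\<^esub> \<one>) \<otimes> (\<one> \<otimes>\<^bsub>M\<^esub> \<one>)"
    using brace_distrib[of \<one> \<one> \<one>] by simp
  then have "\<one> \<otimes>\<^bsub>M\<^esub> \<one> = \<one>"
    using P.l_cancel_one' by simp
  then show ?thesis
    using M.l_cancel_one carrier_mult by (metis P.one_closed)
qed

lemma one_mult [simp]: "x \<in> carrier P \<Longrightarrow> \<one> \<otimes>\<^bsub>M\<^esub> x = x"
  using M.l_one carrier_mult by (simp add: one_mult_eq[symmetric])

lemma mult_inv:
  assumes a: "a \<in> carrier P" and b: "b \<in> carrier P"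
  shows "a \<otimes>\<^bsub>M\<^esub> inv b = a \<otimes> inv (a \<otimes>\<^bsub>M\<^esub> b) \<otimes> a"
proof -
  let ?X = "a \<otimes>\<^bsub>M\<^esub> b" and ?Y = "a \<otimes>\<^bsub>M\<^esub> inv b"
  have "a = ?X \<otimes> inv a \<otimes> ?Y"
    using brace_distrib[of a b "inv b"] a b by (simp add: one_mult_eq[symmetric] carrier_mult)
  then have "a \<otimes> inv ?X \<otimes> a = a \<otimes> inv ?X \<otimes> (?X \<otimes> inv a \<otimes> ?Y)"
    by (rule arg_cong[where f = "\<lambda>z. a \<otimes> inv ?X \<otimes> z"])
  also have "\<dots> = ?Y"
    using a b by (simp add: P.m_assoc)
  finally show ?thesis ..
qed

definition lambda_act :: "'a \<Rightarrow> 'a \<Rightarrow> 'a" where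
  "lambda_act a x = inv a \<otimes> (a \<otimes>\<^bsub>M\<^esub> x)"

definition gamma_act :: "'a \<Rightarrow> 'a \<Rightarrow> 'a" where
  "gamma_act a x = (a \<otimes>\<^bsub>M\<^esub> x) \<otimes> inv a"

sublocale lambda: endo_action M P lambda_act
proof
  fix a assume "a \<in> carrier M"
  then have a: "a \<in> carrier P" by (simp add: carrier_mult)
  show "lambda_act a \<in> hom P P"
  proof (rule homI)
    fix x y assume "x \<in> carrier P" "y \<in> carrier P"
    then show "lambda_act a (x \<otimes> y) = lambda_act a x \<otimes> lambda_act a y"
      using a by (simp add: lambda_act_def brace_distrib P.m_assoc)
  qed (use a in \<open>simp add: lambda_act_def\<close>)
next
  fix a b x assume "a \<in> carrier M" "b \<in> carrier M" and x: "x \<in> carrier P"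
  then have a: "a \<in> carrier P" and b: "b \<in> carrier P" by (simp_all add: carrier_mult)
  have "lambda_act a (lambda_act b x)
      = inv a \<otimes> (a \<otimes>\<^bsub>M\<^esub> inv b) \<otimes> inv a \<otimes> (a \<otimes>\<^bsub>M\<^esub> (b \<otimes>\<^bsub>M\<^esub> x))"
    using brace_distrib[of a "inv b" "b \<otimes>\<^bsub>M\<^esub> x"] a b x by (simp add: lambda_act_def P.m_assoc)
  also have "\<dots> = inv (a \<otimes>\<^bsub>M\<^esub> b) \<otimes> (a \<otimes>\<^bsub>M\<^esub> (b \<otimes>\<^bsub>M\<^esub> x))"
    using a b x by (simp add: mult_inv P.m_assoc)
  also have "\<dots> = lambda_act (a \<otimes>\<^bsub>M\<^esub> b) x"
    using a b x by (simp add: lambda_act_def M.m_assoc carrier_mult)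
  finally show "lambda_act (a \<otimes>\<^bsub>M\<^esub> b) x = lambda_act a (lambda_act b x)" ..
next
  fix x assume "x \<in> carrier P"
  then show "lambda_act \<one>\<^bsub>M\<^esub> x = x"
    by (simp add: lambda_act_def one_mult_eq)
qed

sublocale gamma: endo_action M P gamma_act
proof
  fix a assume "a \<in> carrier M"
  then have a: "a \<in> carrier P" by (simp add: carrier_mult)
  show "gamma_act a \<in> hom P P"
  proof (rule homI)
    fix x y assume "x \<in> carrier P" "y \<in> carrier P"
    then show "gamma_act a (x \<otimes> y) = gamma_act a x \<otimes> gamma_act a y"
      using a by (simp add: gamma_act_def brace_distrib P.m_assoc)
  qed (use a in \<open>simp add: gamma_act_def\<close>)
next
  fix a b x assume "a \<in> carrier M" "b \<in> carrier M" and x: "x \<in> carrier P"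
  then have a: "a \<in> carrier P" and b: "b \<in> carrier P" by (simp_all add: carrier_mult)
  have "gamma_act a (gamma_act b x)
      = (a \<otimes>\<^bsub>M\<^esub> (b \<otimes>\<^bsub>M\<^esub> x)) \<otimes> inv a \<otimes> (a \<otimes>\<^bsub>M\<^esub> inv b) \<otimes> inv a"
    using brace_distrib[of a "b \<otimes>\<^bsub>M\<^esub> x" "inv b"] a b x by (simp add: gamma_act_def)
  also have "\<dots> = (a \<otimes>\<^bsub>M\<^esub> (b \<otimes>\<^bsub>M\<^esub> x)) \<otimes> inv (a \<otimes>\<^bsub>M\<^esub> b)"
    using a b x by (simp add: mult_inv P.m_assoc)
  also have "\<dots> = gamma_act (a \<otimes>\<^bsub>M\<^esub> b) x"
    using a b x by (simp add: gamma_act_def M.m_assoc carrier_mult)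
  finally show "gamma_act (a \<otimes>\<^bsub>M\<^esub> b) x = gamma_act a (gamma_act b x)" ..
next
  fix x assume "x \<in> carrier P"
  then show "gamma_act \<one>\<^bsub>M\<^esub> x = x"
    by (simp add: gamma_act_def one_mult_eq)
qed

lemma derived_mult_subset_centralizer:
  assumes "characteristic_subgroup D P" and "cyclic_group (P\<lparr>carrier := D\<rparr>)"
  shows "derived M (carrier M) \<subseteq> centralizer P D"
proof
  fix c assume c: "c \<in> derived M (carrier M)"
  have cP: "c \<in> carrier P"
    using c M.derived_in_carrier[OF order_refl] carrier_mult by auto
  have "D \<subseteq> carrier P"
    using assms(1) subgroup.subset by (auto simp: characteristic_subgroup_def)
  have "c \<otimes> d = d \<otimes> c" if d: "d \<in> D" for d
  proof -
    have "lambda_act c d = d" and "gamma_act c d = d"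
      using lambda.derived_fixes_cyclic_characteristic_subgroup[OF assms]
        gamma.derived_fixes_cyclic_characteristic_subgroup[OF assms] c d
      by (auto simp: lambda.pointwise_stabilizer_def gamma.pointwise_stabilizer_def)
    then have "c \<otimes>\<^bsub>M\<^esub> d = c \<otimes> d" and "c \<otimes>\<^bsub>M\<^esub> d = d \<otimes> c"
      using cP d \<open>D \<subseteq> carrier P\<close> P.inv_solve_left' P.inv_solve_right'
      by (auto simp: lambda_act_def gamma_act_def)
    then show ?thesis by simp
  qed
  then show "c \<in> centralizer P D"
    using cP by (simp add: centralizer_def)
qed

end

theorem corollary4p5:
  fixes P M :: "'a monoid" and D :: "'a set" and n :: nat
  assumes "skew_brace P M"
    and "characteristic_subgroup D P"
    and "cyclic_group (P\<lparr>carrier := D\<rparr>)"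
    and "n > 0"
    and "D \<subseteq> group_center (P\<lparr>carrier := derived_series P n\<rparr>)"
  shows "\<exists>m::nat. m > 0 \<and> derived_series M (m + n) \<subseteq> centralizer P D"
proof -
  interpret skew_brace_pair P M
    using assms(1) by (rule skew_brace_pairI)
  have "derived_series M (1 + n) \<subseteq> derived M (carrier M)"
    using derived_series_subset_derived[OF M.is_group] \<open>n > 0\<close> by simp
  also have "\<dots> \<subseteq> centralizer P D"
    using derived_mult_subset_centralizer[OF assms(2,3)] .
  finally show ?thesis
    by (intro exI[of _ 1]) simp
qed

end
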